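(* Let $\epsilon\in(\frac12,1)$, $W\in\mathcal{P}(\mathcal{Y}|\mathcal{X})$ with $V_\epsilon(W)>0$, and $a>0$ with $a>\frac{2}{1-\epsilon}$. Let $(f,\varphi)$ be an $(N,R_N)$ constant composition code with $$R_N=C(W)+\sqrt{\frac{V_\epsilon(W)}{N}}\Phi^{-1}(\epsilon)-\frac1N\ln\Big(1-\epsilon-\frac2a\Big)$$ and common composition $Q$ satisfying $V(Q,W)<\frac1aV_\epsilon(W)[\Phi^{-1}(\epsilon)]^2$. Then $\bar{\mathrm{P}}_{\mathrm{e}}(f,\varphi)>\epsilon$.
   Context: $\mathcal{X},\mathcal{Y}$ finite; memoryless channel. An $(N,R)$ constant composition code: encoder $\{1,\dots,\lceil e^{NR}\rceil\}\to\mathcal{X}^N$ all of whose codewords have the same empirical distribution (common composition), decoder $\mathcal{Y}^N\to\mathcal{M}$; $\bar{\mathrm{P}}_{\mathrm{e}}$ is average error over uniform messages. $C(W)$ capacity; $\Phi$ standard Gaussian CDF; $q_P(y)=\sum_xP(x)W(y|x)$; $V(P,W)=\sum_{x,y}P(x)W(y|x)[\ln\frac{W(y|x)}{q_P(y)}-\sum_bW(b|x)\ln\frac{W(b|x)}{q_P(b)}]^2$; for $\epsilon\ge1/2$, $V_\epsilon(W)=\max_{Q:I(Q;W)=C(W)}V(Q,W)$. *)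

theory Defs
  imports "HOL-Probability.Probability"
begin

text \<open>Finite alphabets are modelled by finite types 'x and 'y.
  A channel W is a stochastic matrix, W x y = W(y|x).\<close>

definition is_pd :: "('a::finite \<Rightarrow> real) \<Rightarrow> bool" where
  "is_pd P \<longleftrightarrow> (\<forall>a. 0 \<le> P a) \<and> (\<Sum>a\<in>UNIV. P a) = 1"

definition is_channel :: "('x::finite \<Rightarrow> 'y::finite \<Rightarrow> real) \<Rightarrow> bool" where
  "is_channel W \<longleftrightarrow> (\<forall>x. is_pd (W x))"

definition out_dist :: "('x::finite \<Rightarrow> real) \<Rightarrow> ('x \<Rightarrow> 'y::finite \<Rightarrow> real) \<Rightarrow> 'y \<Rightarrow> real" where
  "out_dist P W y = (\<Sum>x\<in>UNIV. P x * W x y)"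

text \<open>Information density term ln (W(y|x)/q_P(y)) (terms with zero weight vanish
  in every sum below, in line with the convention 0 ln 0 = 0).\<close>
definition info_dens :: "('x::finite \<Rightarrow> real) \<Rightarrow> ('x \<Rightarrow> 'y::finite \<Rightarrow> real) \<Rightarrow> 'x \<Rightarrow> 'y \<Rightarrow> real" where
  "info_dens P W x y = (if W x y = 0 then 0 else ln (W x y / out_dist P W y))"

definition cond_div :: "('x::finite \<Rightarrow> real) \<Rightarrow> ('x \<Rightarrow> 'y::finite \<Rightarrow> real) \<Rightarrow> 'x \<Rightarrow> real" where
  "cond_div P W x = (\<Sum>b\<in>UNIV. W x b * info_dens P W x b)"

definition mutual_info :: "('x::finite \<Rightarrow> real) \<Rightarrow> ('x \<Rightarrow> 'y::finite \<Rightarrow> real) \<Rightarrow> real" where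
  "mutual_info P W = (\<Sum>x\<in>UNIV. \<Sum>y\<in>UNIV. P x * W x y * info_dens P W x y)"

definition capacity :: "('x::finite \<Rightarrow> 'y::finite \<Rightarrow> real) \<Rightarrow> real" where
  "capacity W = Sup {mutual_info P W | P. is_pd P}"

definition disp :: "('x::finite \<Rightarrow> real) \<Rightarrow> ('x \<Rightarrow> 'y::finite \<Rightarrow> real) \<Rightarrow> real" where
  "disp P W = (\<Sum>x\<in>UNIV. \<Sum>y\<in>UNIV. P x * W x y * (info_dens P W x y - cond_div P W x)^2)"

text \<open>V_eps(W) for eps >= 1/2: maximum of V(Q,W) over capacity-achieving Q.\<close>
definition V_eps :: "('x::finite \<Rightarrow> 'y::finite \<Rightarrow> real) \<Rightarrow> real" where
  "V_eps W = Sup {disp Q W | Q. is_pd Q \<and> mutual_info Q W = capacity W}"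

definition Phi :: "real \<Rightarrow> real" where
  "Phi t = measure (density lborel std_normal_density) {..t}"

definition Phi_inv :: "real \<Rightarrow> real" where
  "Phi_inv e = (THE t. Phi t = e)"

definition composition :: "nat \<Rightarrow> 'a list \<Rightarrow> 'a \<Rightarrow> real" where
  "composition N xs a = real (card {i. i < N \<and> xs ! i = a}) / real N"

definition num_msgs :: "nat \<Rightarrow> real \<Rightarrow> nat" where
  "num_msgs N R = nat \<lceil>exp (real N * R)\<rceil>"

definition cc_code :: "nat \<Rightarrow> real \<Rightarrow> (nat \<Rightarrow> 'x list) \<Rightarrow> ('y list \<Rightarrow> nat) \<Rightarrow> ('x \<Rightarrow> real) \<Rightarrow> bool" where
  "cc_code N R f phi Q \<longleftrightarrow>
     (\<forall>m\<in>{1..num_msgs N R}. length (f m) = N \<and> composition N (f m) = Q) \<and>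
     (\<forall>ys. length ys = N \<longrightarrow> phi ys \<in> {1..num_msgs N R})"

definition chan_N :: "('x \<Rightarrow> 'y \<Rightarrow> real) \<Rightarrow> nat \<Rightarrow> 'x list \<Rightarrow> 'y list \<Rightarrow> real" where
  "chan_N W N xs ys = (\<Prod>i<N. W (xs ! i) (ys ! i))"

definition avg_err :: "('x \<Rightarrow> 'y::finite \<Rightarrow> real) \<Rightarrow> nat \<Rightarrow> real \<Rightarrow> (nat \<Rightarrow> 'x list) \<Rightarrow> ('y list \<Rightarrow> nat) \<Rightarrow> real" where
  "avg_err W N R f phi =
     (1 / real (num_msgs N R)) *
     (\<Sum>m\<in>{1..num_msgs N R}. \<Sum>ys\<in>{ys. length ys = N \<and> phi ys \<noteq> m}. chan_N W N (f m) ys)"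

end

theory Submission
  imports Defs
begin

(*
  For a codeword x of composition Q the information density
  i(x, y) = sum_i ln (W(y_i | x_i) / q_Q(y_i)) has, under W^N(. | x), mean N I(Q, W) <= N C(W)
  and variance N V(Q, W). Where i(x, y) <= N C(W) + t the channel law is dominated by
  e^(N C(W) + t) q_Q^N(y), and Chebyshev's inequality bounds the mass of the complementary
  event by N V(Q, W) / t^2. Summing over the disjoint decoding sets gives
  1 - Pe <= N V(Q, W) / t^2 + e^(N C(W) + t) / M. For t = sqrt (N V_eps(W)) Phi^-1(eps), which is
  positive because eps > 1/2 = Phi(0), the choice of the rate makes the first term smaller than
  1/a and the second at most 1 - eps - 2/a, so Pe > eps + 1/a.
*)

abbreviation std_normal :: "real measure" where
  "std_normal \<equiv> density lborel std_normal_density"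

interpretation std_normal: real_distribution std_normal
  by (simp add: real_distribution_def real_distribution_axioms_def prob_space_normal_density)

lemma Phi_eq_cdf: "Phi = cdf std_normal"
  by (simp add: fun_eq_iff Phi_def cdf_def2)

lemma std_normal_singleton: "measure std_normal {x} = 0"
proof -
  have "AE z in lborel. z \<in> {x} \<longrightarrow> std_normal_density z = 0"
    using AE_lborel_singleton[of x] by eventually_elim auto
  then have "{x} \<in> null_sets std_normal"
    by (subst null_sets_density_iff) auto
  then show ?thesis
    by (simp add: measure_def null_setsD1)
qed

lemma isCont_Phi: "isCont Phi x"
  unfolding Phi_eq_cdf using std_normal.isCont_cdf std_normal_singleton by simp

lemma Phi_mono: "x \<le> y \<Longrightarrow> Phi x \<le> Phi y"
  unfolding Phi_eq_cdf by (rule std_normal.cdf_nondecreasing)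

lemma Phi_strict_mono: "strict_mono Phi"
proof (rule strict_monoI)
  fix x y :: real
  assume "x < y"
  have "{x<..y} \<notin> null_sets std_normal"
  proof
    assume "{x<..y} \<in> null_sets std_normal"
    then have "AE z in lborel. z \<in> {x<..y} \<longrightarrow> std_normal_density z = 0"
      by (subst (asm) null_sets_density_iff) auto
    then have "AE z in lborel. z \<notin> {x<..y}"
      by eventually_elim (metis less_irrefl normal_density_pos zero_less_one)
    then have "{x<..y} \<in> null_sets lborel"
      using AE_iff_null_sets[of "{x<..y}" lborel] by simp
    with \<open>x < y\<close> show False
      by (simp add: emeasure_lborel_Ioc null_sets_def)
  qed
  then have "measure std_normal {x<..y} > 0"
    by (simp add: std_normal.emeasure_eq_measure null_sets_def zero_less_measure_iff)
  then show "Phi x < Phi y"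
    unfolding Phi_eq_cdf using std_normal.cdf_diff_eq[OF \<open>x < y\<close>] by simp
qed

lemma emeasure_std_normal_atMost_0_eq_atLeast_0: "emeasure std_normal {..0} = emeasure std_normal {0..}"
proof -
  have "emeasure std_normal {..0} = (\<integral>\<^sup>+ z. ennreal (std_normal_density z * indicator {..0} z) \<partial>lborel)"
    by (subst emeasure_density) (auto intro!: nn_integral_cong simp: indicator_def)
  also have "\<dots> = (\<integral>\<^sup>+ z. ennreal (std_normal_density z * indicator {..0} z) \<partial>distr lborel borel uminus)"
    by (simp add: lborel_distr_uminus)
  also have "\<dots> = (\<integral>\<^sup>+ z. ennreal (std_normal_density (- z) * indicator {..0} (- z)) \<partial>lborel)"
    by (subst nn_integral_distr) auto
  also have "\<dots> = (\<integral>\<^sup>+ z. ennreal (std_normal_density z * indicator {0..} z) \<partial>lborel)"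
    by (auto intro!: nn_integral_cong simp: indicator_def std_normal_density_def)
  also have "\<dots> = emeasure std_normal {0..}"
    by (subst emeasure_density) (auto intro!: nn_integral_cong simp: indicator_def)
  finally show ?thesis .
qed

lemma Phi_0: "Phi 0 = 1 / 2"
proof -
  have "measure std_normal {0..} = measure std_normal ({0<..} \<union> {0})"
    by (metis Un_commute ivl_disj_un_singleton(1))
  also have "\<dots> = measure std_normal {0<..}"
    by (rule measure_Un_null_set)
      (auto simp: null_setsI std_normal.emeasure_eq_measure std_normal_singleton)
  finally have "measure std_normal {0..} = measure std_normal {0<..}" .
  moreover have "measure std_normal {..0} = measure std_normal {0..}"
    using emeasure_std_normal_atMost_0_eq_atLeast_0 by (simp add: measure_def)
  moreover have "measure std_normal {..0} + measure std_normal {0<..} = 1"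
  proof -
    have "{..0} \<union> {0<..} = (UNIV :: real set)" "{..0} \<inter> {0<..} = ({} :: real set)"
      by auto
    then show ?thesis
      using std_normal.finite_measure_Union[of "{..0}" "{0<..}"] std_normal.prob_space
      by (simp add: space_density)
  qed
  ultimately show ?thesis
    by (simp add: Phi_def)
qed

lemma Phi_inv_eq: "Phi t = e \<Longrightarrow> Phi_inv e = t"
  unfolding Phi_inv_def using strict_mono_eq[OF Phi_strict_mono] by blast

lemma Phi_Phi_inv:
  assumes "0 < e" "e < 1"
  shows "Phi (Phi_inv e) = e"
proof -
  have "eventually (\<lambda>s. Phi s < e) at_bot" "eventually (\<lambda>s. Phi s > e) at_top"
    using order_tendstoD(1)[OF std_normal.cdf_lim_at_top_prob \<open>e < 1\<close>]
      order_tendstoD(2)[OF std_normal.cdf_lim_at_bot \<open>0 < e\<close>]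
    by (simp_all add: Phi_eq_cdf)
  then obtain s u where "Phi s < e" "Phi u > e" "s \<le> u"
    unfolding eventually_at_bot_linorder eventually_at_top_linorder
    by (metis nle_le order_refl)
  then obtain t where "Phi t = e"
    using IVT[of Phi s e u] isCont_Phi by force
  then show ?thesis
    by (metis Phi_inv_eq)
qed

lemma Phi_inv_pos:
  assumes "1 / 2 < e" "e < 1"
  shows "0 < Phi_inv e"
proof -
  have "Phi 0 < Phi (Phi_inv e)"
    using assms by (simp add: Phi_0 Phi_Phi_inv)
  then show ?thesis
    by (metis Phi_mono not_less)
qed

lemma finite_lists_length: "finite {ys :: 'a::finite list. length ys = n}"
  using finite_lists_length_eq[of "UNIV :: 'a set" n] by simp

lemma sum_lists_length_Suc:
  fixes g :: "'a::finite list \<Rightarrow> 'b::comm_monoid_add"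
  shows "(\<Sum>ys | length ys = Suc n. g ys) = (\<Sum>y\<in>UNIV. \<Sum>ys | length ys = n. g (y # ys))"
proof -
  have "{ys :: 'a list. length ys = Suc n} = case_prod (#) ` (UNIV \<times> {ys. length ys = n})"
    by (auto simp: image_def length_Suc_conv)
  moreover have "inj_on (case_prod (#)) (UNIV \<times> {ys :: 'a list. length ys = n})"
    by (auto simp: inj_on_def)
  ultimately show ?thesis
    by (simp add: sum.reindex sum.cartesian_product split_def)
qed

lemma chan_N_Cons: "chan_N W (Suc n) (x # xs) (y # ys) = W x y * chan_N W n xs ys"
  unfolding chan_N_def prod.lessThan_Suc_shift by simp

context
  fixes W :: "'x \<Rightarrow> 'y::finite \<Rightarrow> real"
  assumes rows_sum_1: "\<And>x. (\<Sum>y\<in>UNIV. W x y) = 1"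
begin

lemma sum_chan_N:
  "length xs = n \<Longrightarrow> (\<Sum>ys | length ys = n. chan_N W n xs ys) = 1"
proof (induction xs arbitrary: n)
  case Nil
  then show ?case
    by (simp add: chan_N_def)
next
  case (Cons x xs)
  then obtain m where "n = Suc m" "length xs = m"
    by auto
  then show ?case
    by (simp add: sum_lists_length_Suc chan_N_Cons rows_sum_1 Cons.IH flip: sum_distrib_left)
qed

lemma sum_chan_N_mult_sum:
  "length xs = n \<Longrightarrow>
   (\<Sum>ys | length ys = n. chan_N W n xs ys * (\<Sum>i<n. h (xs ! i) (ys ! i)))
     = (\<Sum>i<n. \<Sum>y\<in>UNIV. W (xs ! i) y * h (xs ! i) y)"
proof (induction xs arbitrary: n)
  case Nil
  then show ?case
    by simp
next
  case (Cons x xs)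
  then obtain m where n: "n = Suc m" "length xs = m"
    by auto
  have "(\<Sum>ys | length ys = n. chan_N W n (x # xs) ys * (\<Sum>i<n. h ((x # xs) ! i) (ys ! i)))
      = (\<Sum>y\<in>UNIV. \<Sum>ys | length ys = m. W x y * chan_N W m xs ys * h x y
          + W x y * (chan_N W m xs ys * (\<Sum>i<m. h (xs ! i) (ys ! i))))"
    unfolding n sum_lists_length_Suc chan_N_Cons sum.lessThan_Suc_shift
    by (simp add: algebra_simps)
  also have "\<dots> = (\<Sum>y\<in>UNIV. W x y * h x y + W x y * (\<Sum>i<m. \<Sum>y\<in>UNIV. W (xs ! i) y * h (xs ! i) y))"
    by (simp add: sum.distrib mult.assoc Cons.IH[OF n(2)] sum_chan_N[OF n(2)]
        flip: sum_distrib_left sum_distrib_right)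
  also have "\<dots> = (\<Sum>i<n. \<Sum>y\<in>UNIV. W ((x # xs) ! i) y * h ((x # xs) ! i) y)"
    unfolding n sum.lessThan_Suc_shift
    by (simp add: sum.distrib rows_sum_1 flip: sum_distrib_right)
  finally show ?case .
qed

lemma sum_chan_N_mult_sum_square:
  assumes centred: "\<And>x. (\<Sum>y\<in>UNIV. W x y * h x y) = 0"
  shows "length xs = n \<Longrightarrow>
    (\<Sum>ys | length ys = n. chan_N W n xs ys * (\<Sum>i<n. h (xs ! i) (ys ! i))\<^sup>2)
      = (\<Sum>i<n. \<Sum>y\<in>UNIV. W (xs ! i) y * (h (xs ! i) y)\<^sup>2)"
proof (induction xs arbitrary: n)
  case Nil
  then show ?case
    by simp
next
  case (Cons x xs)
  then obtain m where n: "n = Suc m" "length xs = m"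
    by auto
  let ?H = "\<lambda>ys. \<Sum>i<m. h (xs ! i) (ys ! i)"
  have "(\<Sum>ys | length ys = n. chan_N W n (x # xs) ys * (\<Sum>i<n. h ((x # xs) ! i) (ys ! i))\<^sup>2)
      = (\<Sum>y\<in>UNIV. \<Sum>ys | length ys = m. W x y * (h x y)\<^sup>2 * chan_N W m xs ys
          + 2 * (W x y * h x y) * (chan_N W m xs ys * ?H ys)
          + W x y * (chan_N W m xs ys * (?H ys)\<^sup>2))"
    unfolding n sum_lists_length_Suc chan_N_Cons sum.lessThan_Suc_shift
    by (simp add: algebra_simps power2_eq_square)
  also have "\<dots> = (\<Sum>y\<in>UNIV. W x y * (h x y)\<^sup>2
       + 2 * (W x y * h x y) * (\<Sum>i<m. \<Sum>y\<in>UNIV. W (xs ! i) y * h (xs ! i) y)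
       + W x y * (\<Sum>i<m. \<Sum>y\<in>UNIV. W (xs ! i) y * (h (xs ! i) y)\<^sup>2))"
    by (simp add: sum.distrib mult.assoc Cons.IH[OF n(2)] sum_chan_N[OF n(2)]
        sum_chan_N_mult_sum[OF n(2)] flip: sum_distrib_left sum_distrib_right)
  also have "\<dots> = (\<Sum>i<n. \<Sum>y\<in>UNIV. W ((x # xs) ! i) y * (h ((x # xs) ! i) y)\<^sup>2)"
    unfolding n sum.lessThan_Suc_shift
    by (simp add: sum.distrib centred rows_sum_1 flip: sum_distrib_right)
  finally show ?case .
qed

end

lemma sum_nth_eq_composition:
  fixes g :: "'a::finite \<Rightarrow> real"
  shows "(\<Sum>i<N. g (xs ! i)) = real N * (\<Sum>a\<in>UNIV. composition N xs a * g a)"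
proof -
  have "(\<Sum>i<N. g (xs ! i)) = (\<Sum>i<N. \<Sum>a\<in>UNIV. if xs ! i = a then g a else 0)"
    by simp
  also have "\<dots> = (\<Sum>a\<in>UNIV. \<Sum>i<N. if xs ! i = a then g a else 0)"
    by (rule sum.swap)
  also have "\<dots> = (\<Sum>a\<in>UNIV. real (card {i. i < N \<and> xs ! i = a}) * g a)"
    by (rule sum.cong) (auto simp: sum.If_cases lessThan_def Int_def conj_commute)
  also have "\<dots> = real N * (\<Sum>a\<in>UNIV. composition N xs a * g a)"
    by (cases "N = 0") (simp_all add: composition_def sum_distrib_left)
  finally show ?thesis .
qed

lemma is_pd_composition:
  assumes "0 < N"
  shows "is_pd (composition N xs)"
  using sum_nth_eq_composition[where g = "\<lambda>_. 1" and N = N and xs = xs] assms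
  by (simp add: is_pd_def composition_def)

lemma composition_nth_pos:
  assumes "i < N"
  shows "0 < composition N xs (xs ! i)"
proof -
  have "i \<in> {j. j < N \<and> xs ! j = xs ! i}"
    using assms by simp
  then have "0 < card {j. j < N \<and> xs ! j = xs ! i}"
    by (auto simp: card_gt_0_iff)
  with assms show ?thesis
    unfolding composition_def by (intro divide_pos_pos) auto
qed

lemma channel_nonneg: "is_channel W \<Longrightarrow> 0 \<le> W x y"
  by (simp add: is_channel_def is_pd_def)

lemma channel_rows_sum_1: "is_channel W \<Longrightarrow> (\<Sum>y\<in>UNIV. W x y) = 1"
  by (simp add: is_channel_def is_pd_def)

lemma out_dist_ge:
  assumes "is_channel W" "is_pd P"
  shows "P x * W x y \<le> out_dist P W y"
  unfolding out_dist_def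
  by (rule member_le_sum) (use assms in \<open>auto simp: is_pd_def channel_nonneg\<close>)

lemma out_dist_pos:
  assumes "is_channel W" "is_pd P" "0 < P x" "0 < W x y"
  shows "0 < out_dist P W y"
  using out_dist_ge[OF assms(1,2), of x y] mult_pos_pos[OF assms(3,4)] by linarith

lemma sum_out_dist:
  assumes "is_channel W" "is_pd P"
  shows "(\<Sum>y\<in>UNIV. out_dist P W y) = 1"
  using assms unfolding out_dist_def
  by (subst sum.swap) (simp add: channel_rows_sum_1 is_pd_def flip: sum_distrib_left)

lemma mutual_info_eq_sum_cond_div: "mutual_info P W = (\<Sum>x\<in>UNIV. P x * cond_div P W x)"
  unfolding mutual_info_def cond_div_def by (simp add: sum_distrib_left mult.assoc)

lemma sum_info_dens_minus_cond_div:
  "is_channel W \<Longrightarrow> (\<Sum>y\<in>UNIV. W x y * (info_dens P W x y - cond_div P W x)) = 0"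
  by (simp add: right_diff_distrib sum_subtractf cond_div_def channel_rows_sum_1
      flip: sum_distrib_right)

lemma mutual_info_term_le_1:
  assumes "is_channel W" "is_pd P"
  shows "P x * W x y * info_dens P W x y \<le> 1"
proof (cases "P x = 0 \<or> W x y = 0")
  case True
  then show ?thesis
    by (auto simp: info_dens_def)
next
  case False
  let ?q = "out_dist P W y"
  have "W x y \<le> 1"
    using member_le_sum[of y UNIV "W x"] assms(1) by (simp add: channel_nonneg channel_rows_sum_1)
  moreover have W: "0 < W x y" and P: "0 < P x"
    using False assms channel_nonneg[of W x y] by (auto simp: is_pd_def less_le)
  moreover have q: "0 < ?q" "P x * W x y \<le> ?q"
    using out_dist_pos[OF assms P W] out_dist_ge[OF assms] by auto
  ultimately have "P x * W x y * ln (W x y / ?q) \<le> P x * W x y * (W x y / ?q)"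
    using ln_le_minus_one[of "W x y / ?q"] by (intro mult_left_mono) auto
  also have "\<dots> = W x y * (P x * W x y / ?q)"
    by simp
  also have "\<dots> \<le> 1"
    using q W P \<open>W x y \<le> 1\<close> by (intro mult_le_one) auto
  finally show ?thesis
    using False by (simp add: info_dens_def)
qed

lemma mutual_info_le_capacity:
  fixes W :: "'x::finite \<Rightarrow> 'y::finite \<Rightarrow> real"
  assumes "is_channel W" "is_pd P"
  shows "mutual_info P W \<le> capacity W"
proof -
  have "mutual_info P' W \<le> real (CARD('x)) * real (CARD('y))" if "is_pd P'"
    for P' :: "'x::finite \<Rightarrow> real"
  proof -
    have "mutual_info P' W \<le> (\<Sum>x\<in>(UNIV :: 'x set). \<Sum>y\<in>(UNIV :: 'y set). 1)"
      unfolding mutual_info_def by (intro sum_mono mutual_info_term_le_1[OF assms(1) that])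
    then show ?thesis
      by simp
  qed
  then show ?thesis
    unfolding capacity_def by (intro cSup_upper bdd_aboveI) (use assms(2) in auto)
qed

definition out_dist_N :: "('x::finite \<Rightarrow> real) \<Rightarrow> ('x \<Rightarrow> 'y::finite \<Rightarrow> real) \<Rightarrow> nat \<Rightarrow> 'y list \<Rightarrow> real"
  where "out_dist_N P W N ys = (\<Prod>i<N. out_dist P W (ys ! i))"

definition info_dens_N ::
    "('x::finite \<Rightarrow> real) \<Rightarrow> ('x \<Rightarrow> 'y::finite \<Rightarrow> real) \<Rightarrow> nat \<Rightarrow> 'x list \<Rightarrow> 'y list \<Rightarrow> real"
  where "info_dens_N P W N xs ys = (\<Sum>i<N. info_dens P W (xs ! i) (ys ! i))"

lemma sum_out_dist_N:
  assumes "is_channel W" "is_pd P"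
  shows "(\<Sum>ys | length ys = N. out_dist_N P W N ys) = 1"
  using sum_chan_N[of "\<lambda>_. out_dist P W" "replicate N undefined" N] sum_out_dist[OF assms]
  by (simp add: out_dist_N_def chan_N_def)

lemma out_dist_N_nonneg:
  assumes "is_channel W" "is_pd P"
  shows "0 \<le> out_dist_N P W N ys"
  unfolding out_dist_N_def out_dist_def using assms
  by (intro prod_nonneg sum_nonneg mult_nonneg_nonneg) (auto simp: is_pd_def channel_nonneg)

lemma chan_N_eq_out_dist_N_exp:
  assumes "is_channel W" "is_pd P"
    and "\<And>i. i < N \<Longrightarrow> 0 < P (xs ! i)" "\<And>i. i < N \<Longrightarrow> 0 < W (xs ! i) (ys ! i)"
  shows "chan_N W N xs ys = out_dist_N P W N ys * exp (info_dens_N P W N xs ys)"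
proof -
  have "W (xs ! i) (ys ! i) = out_dist P W (ys ! i) * exp (info_dens P W (xs ! i) (ys ! i))"
    if "i < N" for i
    using assms(4)[OF that] out_dist_pos[OF assms(1,2) assms(3,4)[OF that]]
    by (simp add: info_dens_def)
  then show ?thesis
    unfolding chan_N_def out_dist_N_def info_dens_N_def exp_sum[OF finite_lessThan]
    by (simp add: prod.distrib[symmetric])
qed

lemma chan_N_le_exp_out_dist_N:
  assumes "is_channel W" "is_pd P" "\<And>i. i < N \<Longrightarrow> 0 < P (xs ! i)"
    and "info_dens_N P W N xs ys \<le> \<gamma>"
  shows "chan_N W N xs ys \<le> exp \<gamma> * out_dist_N P W N ys"
proof (cases "\<forall>i<N. 0 < W (xs ! i) (ys ! i)")
  case True
  then have "chan_N W N xs ys = out_dist_N P W N ys * exp (info_dens_N P W N xs ys)"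
    using chan_N_eq_out_dist_N_exp[OF assms(1-3)] by blast
  also have "\<dots> \<le> out_dist_N P W N ys * exp \<gamma>"
    using assms(4) out_dist_N_nonneg[OF assms(1,2)] by (intro mult_left_mono) auto
  finally show ?thesis
    by (simp add: mult.commute)
next
  case False
  then obtain i where "i < N" "W (xs ! i) (ys ! i) = 0"
    using channel_nonneg[OF assms(1)] by (metis not_le order.antisym)
  then have "chan_N W N xs ys = 0"
    unfolding chan_N_def by (intro prod_zero) auto
  then show ?thesis
    using out_dist_N_nonneg[OF assms(1,2)] by simp
qed

lemma sum_chan_N_info_dens_N_variance:
  assumes "is_channel W" "length xs = N" "composition N xs = Q"
  shows "(\<Sum>ys | length ys = N. chan_N W N xs ys * (info_dens_N Q W N xs ys - real N * mutual_info Q W)\<^sup>2)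
    = real N * disp Q W"
proof -
  define h where "h x y = info_dens Q W x y - cond_div Q W x" for x y
  have "real N * mutual_info Q W = (\<Sum>i<N. cond_div Q W (xs ! i))"
    using assms(3) by (simp add: sum_nth_eq_composition mutual_info_eq_sum_cond_div)
  then have "info_dens_N Q W N xs ys - real N * mutual_info Q W = (\<Sum>i<N. h (xs ! i) (ys ! i))" for ys
    by (simp add: info_dens_N_def h_def sum_subtractf)
  then have "(\<Sum>ys | length ys = N. chan_N W N xs ys * (info_dens_N Q W N xs ys - real N * mutual_info Q W)\<^sup>2)
      = (\<Sum>i<N. \<Sum>y\<in>UNIV. W (xs ! i) y * (h (xs ! i) y)\<^sup>2)"
    using sum_chan_N_mult_sum_square[of W h xs N] assms(1,2)
    by (simp add: channel_rows_sum_1 sum_info_dens_minus_cond_div h_def)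
  also have "\<dots> = real N * disp Q W"
    unfolding sum_nth_eq_composition[where g = "\<lambda>x. \<Sum>y\<in>UNIV. W x y * (h x y)\<^sup>2"] assms(3)
    by (simp add: disp_def h_def sum_distrib_left mult.assoc)
  finally show ?thesis .
qed

lemma sum_if_gt_le_second_moment:
  fixes p F :: "'a \<Rightarrow> real"
  assumes "\<And>y. y \<in> A \<Longrightarrow> 0 \<le> p y" "0 < t"
  shows "(\<Sum>y\<in>A. if t < F y then p y else 0) \<le> (\<Sum>y\<in>A. p y * (F y)\<^sup>2) / t\<^sup>2"
proof -
  have "(if t < F y then p y else 0) \<le> p y * (F y)\<^sup>2 / t\<^sup>2" if "y \<in> A" for y
  proof (cases "t < F y")
    case True
    then have "1 \<le> (F y)\<^sup>2 / t\<^sup>2"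
      using assms(2) by (simp add: power_mono)
    then show ?thesis
      using True assms(1)[OF that] mult_left_mono[of 1 "(F y)\<^sup>2 / t\<^sup>2" "p y"] by simp
  qed (use assms(1)[OF that] in simp)
  then show ?thesis
    unfolding sum_divide_distrib by (rule sum_mono)
qed

lemma sum_chan_N_le_codeword:
  fixes W :: "'x::finite \<Rightarrow> 'y::finite \<Rightarrow> real"
  assumes "is_channel W" "0 < N" "length xs = N" "composition N xs = Q" "0 < t"
    and "D \<subseteq> {ys. length ys = N}"
  shows "(\<Sum>ys\<in>D. chan_N W N xs ys)
    \<le> real N * disp Q W / t\<^sup>2 + exp (real N * mutual_info Q W + t) * (\<Sum>ys\<in>D. out_dist_N Q W N ys)"
proof -
  define Y where "Y = {ys :: 'y list. length ys = N}"
  define F where "F ys = info_dens_N Q W N xs ys - real N * mutual_info Q W" for ys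
  have Q: "is_pd Q"
    using is_pd_composition[OF assms(2), of xs] assms(4) by simp
  have chan_nonneg: "0 \<le> chan_N W N xs ys" for ys
    unfolding chan_N_def by (simp add: prod_nonneg channel_nonneg[OF assms(1)])
  have "chan_N W N xs ys
      \<le> (if t < F ys then chan_N W N xs ys else 0) + exp (real N * mutual_info Q W + t) * out_dist_N Q W N ys"
    for ys
  proof (cases "t < F ys")
    case False
    then have "chan_N W N xs ys \<le> exp (real N * mutual_info Q W + t) * out_dist_N Q W N ys"
      using assms(1,3,4) Q composition_nth_pos
      by (intro chan_N_le_exp_out_dist_N) (auto simp: F_def)
    then show ?thesis
      using False by simp
  qed (simp add: out_dist_N_nonneg[OF assms(1) Q])
  then have "(\<Sum>ys\<in>D. chan_N W N xs ys)
      \<le> (\<Sum>ys\<in>D. if t < F ys then chan_N W N xs ys else 0)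
        + exp (real N * mutual_info Q W + t) * (\<Sum>ys\<in>D. out_dist_N Q W N ys)"
    by (simp add: sum_distrib_left flip: sum.distrib) (rule sum_mono)
  also have "(\<Sum>ys\<in>D. if t < F ys then chan_N W N xs ys else 0)
      \<le> (\<Sum>ys\<in>Y. if t < F ys then chan_N W N xs ys else 0)"
    using assms(6) chan_nonneg unfolding Y_def by (intro sum_mono2 finite_lists_length) auto
  also have "\<dots> \<le> (\<Sum>ys\<in>Y. chan_N W N xs ys * (F ys)\<^sup>2) / t\<^sup>2"
    using chan_nonneg assms(5) by (rule sum_if_gt_le_second_moment)
  also have "\<dots> = real N * disp Q W / t\<^sup>2"
    unfolding Y_def F_def using sum_chan_N_info_dens_N_variance[OF assms(1,3,4)] by simp
  finally show ?thesis
    by simp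
qed

lemma num_msgs_ge_exp: "exp (real N * R) \<le> real (num_msgs N R)"
proof -
  have "0 < \<lceil>exp (real N * R)\<rceil>"
    by (simp add: zero_less_ceiling)
  then show ?thesis
    unfolding num_msgs_def by (simp add: le_of_int_ceiling)
qed

lemma num_msgs_pos: "0 < num_msgs N R"
  using num_msgs_ge_exp[of N R] exp_gt_zero[of "real N * R"] by linarith

lemma avg_err_ge:
  fixes W :: "'x::finite \<Rightarrow> 'y::finite \<Rightarrow> real" and N :: nat and R :: real
  defines "M \<equiv> num_msgs N R"
  assumes "is_channel W"
    and enc: "\<And>m. m \<in> {1..M} \<Longrightarrow> length (f m) = N"
    and dec: "\<And>ys. length ys = N \<Longrightarrow> \<phi> ys \<in> {1..M}"
    and q: "(\<Sum>ys | length ys = N. q ys) = 1"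
    and correct: "\<And>m. m \<in> {1..M} \<Longrightarrow>
      (\<Sum>ys | length ys = N \<and> \<phi> ys = m. chan_N W N (f m) ys)
        \<le> B + K * (\<Sum>ys | length ys = N \<and> \<phi> ys = m. q ys)"
  shows "1 - B - K / real M \<le> avg_err W N R f \<phi>"
proof -
  define Y where "Y = {ys :: 'y list. length ys = N}"
  have "finite Y"
    unfolding Y_def by (rule finite_lists_length)
  have M: "0 < real M"
    unfolding M_def by (simp add: num_msgs_pos)
  have err: "(\<Sum>ys | length ys = N \<and> \<phi> ys \<noteq> m. chan_N W N (f m) ys)
      = 1 - (\<Sum>ys | length ys = N \<and> \<phi> ys = m. chan_N W N (f m) ys)" if "m \<in> {1..M}" for m
  proof -
    have "(\<Sum>ys\<in>Y. chan_N W N (f m) ys)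
        = (\<Sum>ys\<in>{ys \<in> Y. \<phi> ys \<noteq> m}. chan_N W N (f m) ys) + (\<Sum>ys\<in>{ys \<in> Y. \<phi> ys = m}. chan_N W N (f m) ys)"
      using \<open>finite Y\<close> by (simp add: sum.inter_filter flip: sum.distrib) (rule sum.cong; simp)
    then show ?thesis
      using sum_chan_N[OF channel_rows_sum_1[OF assms(2)] enc[OF that]] by (simp add: Y_def)
  qed
  have q_partition: "(\<Sum>m\<in>{1..M}. \<Sum>ys | length ys = N \<and> \<phi> ys = m. q ys) = 1"
  proof -
    have "\<phi> ` Y \<subseteq> {1..M}"
      using dec by (auto simp: Y_def)
    from sum.group[OF \<open>finite Y\<close> finite_atLeastAtMost this, of q] show ?thesis
      using q by (simp add: Y_def)
  qed
  have "(\<Sum>m\<in>{1..M}. \<Sum>ys | length ys = N \<and> \<phi> ys = m. chan_N W N (f m) ys)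
      \<le> (\<Sum>m\<in>{1..M}. B + K * (\<Sum>ys | length ys = N \<and> \<phi> ys = m. q ys))"
    using correct by (rule sum_mono)
  also have "\<dots> = real M * B + K"
    using q_partition by (simp add: sum.distrib flip: sum_distrib_left)
  finally have "(\<Sum>m\<in>{1..M}. \<Sum>ys | length ys = N \<and> \<phi> ys = m. chan_N W N (f m) ys) \<le> real M * B + K" .
  then have "real M * (1 - B - K / real M)
      \<le> (\<Sum>m\<in>{1..M}. \<Sum>ys | length ys = N \<and> \<phi> ys \<noteq> m. chan_N W N (f m) ys)"
    using M by (simp add: err sum_subtractf algebra_simps)
  then show ?thesis
    using M unfolding avg_err_def M_def[symmetric] by (simp add: field_simps)
qed

lemma exp_rate_mult:
  assumes "0 < N" "0 < c"
  shows "exp (real N * (C + sqrt (V / real N) * p - (1 / real N) * ln c)) * c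
    = exp (real N * C + sqrt (real N * V) * p)"
proof -
  have "real N * sqrt (V / real N) = sqrt ((real N)\<^sup>2 * (V / real N))"
    by (simp only: real_sqrt_mult real_sqrt_abs abs_of_nat)
  also have "\<dots> = sqrt (real N * V)"
    using assms(1) by (simp add: power2_eq_square)
  finally show ?thesis
    using assms by (simp add: algebra_simps exp_add exp_diff)
qed

lemma cc_code_avg_err_ge:
  fixes W :: "'x::finite \<Rightarrow> 'y::finite \<Rightarrow> real"
  assumes W: "is_channel W" and "0 < N" and code: "cc_code N R f \<phi> Q" and "0 < t"
  shows "1 - real N * disp Q W / t\<^sup>2 - exp (real N * capacity W + t) / real (num_msgs N R)
    \<le> avg_err W N R f \<phi>"
proof -
  define K where "K = exp (real N * capacity W + t)"
  have enc: "length (f m) = N \<and> composition N (f m) = Q" if "m \<in> {1..num_msgs N R}" for m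
    using code that by (simp add: cc_code_def)
  have Q: "is_pd Q"
    using enc[of 1] num_msgs_pos[of N R] is_pd_composition[OF \<open>0 < N\<close>] by auto
  have K: "exp (real N * mutual_info Q W + t) \<le> K"
    unfolding K_def using mutual_info_le_capacity[OF W Q] \<open>0 < N\<close> by simp
  have correct: "(\<Sum>ys | length ys = N \<and> \<phi> ys = m. chan_N W N (f m) ys)
      \<le> real N * disp Q W / t\<^sup>2 + K * (\<Sum>ys | length ys = N \<and> \<phi> ys = m. out_dist_N Q W N ys)"
    if m: "m \<in> {1..num_msgs N R}" for m
  proof -
    have "(\<Sum>ys | length ys = N \<and> \<phi> ys = m. chan_N W N (f m) ys)
        \<le> real N * disp Q W / t\<^sup>2
          + exp (real N * mutual_info Q W + t) * (\<Sum>ys | length ys = N \<and> \<phi> ys = m. out_dist_N Q W N ys)"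
      using enc[OF m] by (intro sum_chan_N_le_codeword[OF W \<open>0 < N\<close> _ _ \<open>0 < t\<close>]) auto
    also have "\<dots> \<le> real N * disp Q W / t\<^sup>2 + K * (\<Sum>ys | length ys = N \<and> \<phi> ys = m. out_dist_N Q W N ys)"
      using K out_dist_N_nonneg[OF W Q] by (intro add_left_mono mult_right_mono sum_nonneg) auto
    finally show ?thesis .
  qed
  have dec: "\<phi> ys \<in> {1..num_msgs N R}" if "length ys = N" for ys
    using code that by (simp add: cc_code_def)
  show ?thesis
    using avg_err_ge[OF W _ dec sum_out_dist_N[OF W Q] correct] enc unfolding K_def by blast
qed

theorem lemma13:
  fixes W :: "'x::finite \<Rightarrow> 'y::finite \<Rightarrow> real"
    and \<epsilon> a :: real and N :: nat
    and f :: "nat \<Rightarrow> 'x list" and \<phi> :: "'y list \<Rightarrow> nat" and Q :: "'x \<Rightarrow> real"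
  assumes "is_channel W"
    and "1/2 < \<epsilon>" and "\<epsilon> < 1"
    and "V_eps W > 0"
    and "a > 0" and "a > 2 / (1 - \<epsilon>)"
    and "N \<ge> 1"
    and "cc_code N (capacity W + sqrt (V_eps W / real N) * Phi_inv \<epsilon>
                     - (1 / real N) * ln (1 - \<epsilon> - 2 / a)) f \<phi> Q"
    and "disp Q W < (1 / a) * V_eps W * (Phi_inv \<epsilon>)^2"
  shows "avg_err W N (capacity W + sqrt (V_eps W / real N) * Phi_inv \<epsilon>
                     - (1 / real N) * ln (1 - \<epsilon> - 2 / a)) f \<phi> > \<epsilon>"
proof -
  define c where "c = 1 - \<epsilon> - 2 / a"
  define R where "R = capacity W + sqrt (V_eps W / real N) * Phi_inv \<epsilon> - (1 / real N) * ln c"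
  define t where "t = sqrt (real N * V_eps W) * Phi_inv \<epsilon>"
  have N: "0 < N"
    using assms(7) by simp
  have c: "0 < c" "\<epsilon> < 1 - 1 / a - c"
    using assms(3,5,6) by (simp_all add: c_def field_simps)
  have p: "0 < Phi_inv \<epsilon>"
    using Phi_inv_pos[OF assms(2,3)] .
  have "0 < t"
    using p N assms(4) by (simp add: t_def)
  then have "1 - real N * disp Q W / t\<^sup>2 - exp (real N * capacity W + t) / real (num_msgs N R)
      \<le> avg_err W N R f \<phi>"
    using cc_code_avg_err_ge[OF assms(1) N] assms(8) by (simp add: R_def c_def)
  moreover have "real N * disp Q W / t\<^sup>2 < 1 / a"
    using assms(4,9) N p by (simp add: t_def power_mult_distrib field_simps)
  moreover have "exp (real N * capacity W + t) / real (num_msgs N R) \<le> c"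
  proof -
    have "exp (real N * capacity W + t) = exp (real N * R) * c"
      unfolding R_def t_def using exp_rate_mult[OF N c(1)] by simp
    also have "\<dots> \<le> real (num_msgs N R) * c"
      using num_msgs_ge_exp c(1) by (intro mult_right_mono) auto
    finally show ?thesis
      using num_msgs_pos[of N R] by (simp add: divide_le_eq mult.commute)
  qed
  ultimately have "\<epsilon> < avg_err W N R f \<phi>"
    using c(2) by linarith
  then show ?thesis
    by (simp add: R_def c_def)
qed

end
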